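(* Let $F:X\to X$ be an interaction, let $S\in st_0(\Gamma_F)$, and let $\mathcal{X}_SF$ be the expansion of $F$ over $S$. If $\tilde\Lambda_{pq}$ are constants satisfying the Lipschitz condition for $\mathcal{X}_SF$ with $\rho(\tilde\Lambda)<1$, then $F$ has a globally attracting fixed point, i.e. there exists $\bar x\in X$ such that $F^k(y)\to\bar x$ as $k\to\infty$ for every $y\in X$.
   Context: Let $\mathcal{I}=\{1,\dots,n\}$, $(X_i,d)$ compact metric spaces, $X=\prod_iX_i$ with $d_{\max}(x,y)=\max_id(x_i,y_i)$. An interaction $F:X\to X$ is given by nonempty $\mathcal{I}_j\subseteq\mathcal{I}$ and continuous $F_j:\prod_{i\in\mathcal{I}_j}X_i\to X_j$ with $F(x)_j=F_j(\{x_i\}_{i\in\mathcal{I}_j})$, together with constants $\Lambda_{ij}\ge0$ ($\Lambda_{ij}=0$ if $i\notin\mathcal{I}_j$) with $d(F_j(\{x_i\}),F_j(\{y_i\}))\le\sum_{i\in\mathcal{I}_j}\Lambda_{ij}d(x_i,y_i)$. For a map $G$ on a finite product $\prod_pY_p$ of compact metric spaces whose $q$-th component is a continuous function of the coordinates in a set $\mathcal{J}_q$, constants $\tilde\Lambda_{pq}\ge0$ ($=0$ for $p\notin\mathcal{J}_q$) satisfy the Lipschitz condition if $d(G(u)_q,G(w)_q)\le\sum_{p}\tilde\Lambda_{pq}d(u_p,w_p)$ for all $u,w$. $\rho$ is spectral radius. The graph of interactions $\Gamma_F$ has vertices $v_1,\dots,v_n$ and an edge $v_i\to v_j$ of weight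 $\Lambda_{ij}$ when $i\in\mathcal{I}_j$. $st_0(\Gamma_F)$ is the set of nonempty $S\subseteq\{v_1,\dots,v_n\}$ such that the subgraph induced on the complement of $S$ has no directed cycles and no loops; $\mathcal{I}_S=\{j:v_j\in S\}$. A branch is a path of distinct vertices $u_1,\dots,u_m$, or a cycle ($u_1=u_m$, others distinct), with $u_1,u_m\in S$ and interior vertices $u_2,\dots,u_{m-1}\notin S$; $|\beta|=m$; $\mathcal{B}_S(\Gamma_F)$ denotes the set of branches. Expansion $\mathcal{X}_SF$: for each branch $\beta$ with $r=|\beta|-2\ge1$ introduce new coordinates $\eta(\beta,1),\dots,\eta(\beta,r)$ (distinct new indices), each with state space $X_{a_0}$, $v_{a_0}$ the initial vertex of $\beta$; $B_S$ is the product of these spaces and $X|_S=\prod_{j\in\mathcal{I}_S}X_j$. For $j\in\mathcal{I}_S$, start from $F_j(\{x_i\}_{i\in\mathcal{I}_j})$ and repeatedly replace each occurring variable $x_i$ with $i\notin\mathcal{I}_S$ by $F_i(\{x_k\}_{k\in\mathcal{I}_i})$ until only variables with indices in $\mathcal{I}_S$ remain; each occurrence of $x_{a_0}$ nested as $F_j(\dots F_{a_r}(\dots F_{a_1}(\dots x_{a_0}\dots)))$ corresponds to the branch $\beta=v_{a_0},v_{a_1},\dots,v_{a_r},v_j$ and is replaced by $x_{\eta(\beta,r)}$ if $r\ge1$ (unchanged if $r=0$); the result is $\tilde F_j$. Then $\mathcal{X}_SF:X|_S\times B_S\to X|_S\times B_S$ has components $(\mathcal{X}_SF)_j=\tilde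 F_j$ ($j\in\mathcal{I}_S$), $(\mathcal{X}_SF)_{\eta(\beta,1)}=x_{a_0}$, and $(\mathcal{X}_SF)_{\eta(\beta,\ell)}=x_{\eta(\beta,\ell-1)}$ for $2\le\ell\le|\beta|-2$. *)

theory Defs
  imports "HOL-Analysis.Analysis" "Jordan_Normal_Form.Spectral_Radius"
begin

text \<open>Coordinates are indexed by 1..n; all state spaces X i are subsets of one
  ambient metric space type 'a. A point of X = prod_i X_i is an extensional
  function in PiE {1..n} X.  The component F_j is represented by f j, a function
  on PiE (I j) X (extensional functions on I j).\<close>

definition is_interaction ::
  "nat \<Rightarrow> (nat \<Rightarrow> 'a::metric_space set) \<Rightarrow> (nat \<Rightarrow> nat set) \<Rightarrow>
   (nat \<Rightarrow> (nat \<Rightarrow> 'a) \<Rightarrow> 'a) \<Rightarrow> (nat \<Rightarrow> nat \<Rightarrow> real) \<Rightarrow> bool" where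
  "is_interaction n X I f Lam \<longleftrightarrow>
     (\<forall>j\<in>{1..n}. I j \<noteq> {} \<and> I j \<subseteq> {1..n} \<and>
        continuous_on (PiE (I j) X) (f j) \<and> f j ` PiE (I j) X \<subseteq> X j \<and>
        (\<forall>i\<in>{1..n}. Lam i j \<ge> 0 \<and> (i \<notin> I j \<longrightarrow> Lam i j = 0)) \<and>
        (\<forall>x\<in>PiE (I j) X. \<forall>y\<in>PiE (I j) X.
            dist (f j x) (f j y) \<le> (\<Sum>i\<in>I j. Lam i j * dist (x i) (y i))))"

definition interaction_map ::
  "nat \<Rightarrow> (nat \<Rightarrow> nat set) \<Rightarrow> (nat \<Rightarrow> (nat \<Rightarrow> 'a) \<Rightarrow> 'a) \<Rightarrow> (nat \<Rightarrow> 'a) \<Rightarrow> (nat \<Rightarrow> 'a)" where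
  "interaction_map n I f x = restrict (\<lambda>j. f j (restrict x (I j))) {1..n}"

definition dmax :: "nat \<Rightarrow> (nat \<Rightarrow> 'a::metric_space) \<Rightarrow> (nat \<Rightarrow> 'a) \<Rightarrow> real" where
  "dmax n x y = Max ((\<lambda>i. dist (x i) (y i)) ` {1..n})"

text \<open>Edges of the graph of interactions: (i,j) means v_i \<rightarrow> v_j, i.e. i \<in> I_j.\<close>
definition graph_edges :: "nat \<Rightarrow> (nat \<Rightarrow> nat set) \<Rightarrow> (nat \<times> nat) set" where
  "graph_edges n I = {(i, j). j \<in> {1..n} \<and> i \<in> I j}"

definition st0 :: "nat \<Rightarrow> (nat \<Rightarrow> nat set) \<Rightarrow> nat set \<Rightarrow> bool" where
  "st0 n I S \<longleftrightarrow> S \<noteq> {} \<and> S \<subseteq> {1..n} \<and>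
     acyclic (graph_edges n I \<inter> (({1..n} - S) \<times> ({1..n} - S)))"

definition is_branch :: "nat \<Rightarrow> (nat \<Rightarrow> nat set) \<Rightarrow> nat set \<Rightarrow> nat list \<Rightarrow> bool" where
  "is_branch n I S \<beta> \<longleftrightarrow> length \<beta> \<ge> 2 \<and>
     (\<forall>k. Suc k < length \<beta> \<longrightarrow> (\<beta> ! k, \<beta> ! Suc k) \<in> graph_edges n I) \<and>
     hd \<beta> \<in> S \<and> last \<beta> \<in> S \<and>
     (\<forall>k. 0 < k \<and> k < length \<beta> - 1 \<longrightarrow> \<beta> ! k \<notin> S) \<and>
     (distinct \<beta> \<or> (hd \<beta> = last \<beta> \<and> distinct (tl \<beta>)))"

definition branches :: "nat \<Rightarrow> (nat \<Rightarrow> nat set) \<Rightarrow> nat set \<Rightarrow> nat list set" where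
  "branches n I S = {\<beta>. is_branch n I S \<beta>}"

text \<open>Coordinates of the expansion: Inl j for j \<in> I_S, Inr (beta, l) for eta(beta,l).\<close>
type_synonym eidx = "nat + (nat list \<times> nat)"

definition exp_idx :: "nat \<Rightarrow> (nat \<Rightarrow> nat set) \<Rightarrow> nat set \<Rightarrow> eidx set" where
  "exp_idx n I S = Inl ` S \<union>
     {Inr (\<beta>, l) | \<beta> l. \<beta> \<in> branches n I S \<and> 1 \<le> l \<and> l \<le> length \<beta> - 2}"

definition exp_fam :: "(nat \<Rightarrow> 'a set) \<Rightarrow> eidx \<Rightarrow> 'a set" where
  "exp_fam X q = (case q of Inl j \<Rightarrow> X j | Inr (\<beta>, l) \<Rightarrow> X (hd \<beta>))"

text \<open>Recursive unfolding: exp_term S I f fuel p z is the value of the occurrence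
  of the variable x_(hd p) reached along the path p = [a_0, a_1, ..., a_r, j]
  (most recently substituted vertex first).  The fuel argument only guarantees termination; the
  fuel n+1 used below always suffices since the complement of S is acyclic.\<close>
fun exp_term :: "nat set \<Rightarrow> (nat \<Rightarrow> nat set) \<Rightarrow> (nat \<Rightarrow> (nat \<Rightarrow> 'a) \<Rightarrow> 'a) \<Rightarrow>
    nat \<Rightarrow> nat list \<Rightarrow> (eidx \<Rightarrow> 'a) \<Rightarrow> 'a" where
  "exp_term S I f 0 p z = undefined"
| "exp_term S I f (Suc N) p z =
     (if hd p \<in> S
      then (if length p \<le> 2 then z (Inl (hd p)) else z (Inr (p, length p - 2)))
      else f (hd p) (restrict (\<lambda>k. exp_term S I f N (k # p) z) (I (hd p))))"

definition tilde_F :: "nat \<Rightarrow> nat set \<Rightarrow> (nat \<Rightarrow> nat set) \<Rightarrow> (nat \<Rightarrow> (nat \<Rightarrow> 'a) \<Rightarrow> 'a) \<Rightarrow>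
    nat \<Rightarrow> (eidx \<Rightarrow> 'a) \<Rightarrow> 'a" where
  "tilde_F n S I f j z = f j (restrict (\<lambda>k. exp_term S I f (n + 1) [k, j] z) (I j))"

definition expansion :: "nat \<Rightarrow> nat set \<Rightarrow> (nat \<Rightarrow> nat set) \<Rightarrow> (nat \<Rightarrow> (nat \<Rightarrow> 'a) \<Rightarrow> 'a) \<Rightarrow>
    (eidx \<Rightarrow> 'a) \<Rightarrow> (eidx \<Rightarrow> 'a)" where
  "expansion n S I f z = restrict (\<lambda>q. case q of
       Inl j \<Rightarrow> tilde_F n S I f j z
     | Inr (\<beta>, l) \<Rightarrow> (if l = 1 then z (Inl (hd \<beta>)) else z (Inr (\<beta>, l - 1))))
     (exp_idx n I S)"

text \<open>The coordinates J_q of which the q-th component of the expansion is a function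
  (the variables occurring in its defining expression).\<close>
definition exp_deps :: "nat \<Rightarrow> (nat \<Rightarrow> nat set) \<Rightarrow> nat set \<Rightarrow> eidx \<Rightarrow> eidx set" where
  "exp_deps n I S q = (case q of
       Inl j \<Rightarrow> {Inl (hd \<beta>) | \<beta>. \<beta> \<in> branches n I S \<and> last \<beta> = j \<and> length \<beta> = 2}
              \<union> {Inr (\<beta>, length \<beta> - 2) | \<beta>. \<beta> \<in> branches n I S \<and> last \<beta> = j \<and> length \<beta> \<ge> 3}
     | Inr (\<beta>, l) \<Rightarrow> (if l = 1 then {Inl (hd \<beta>)} else {Inr (\<beta>, l - 1)}))"

definition lipschitz_constants ::
  "'k set \<Rightarrow> ('k \<Rightarrow> 'a::metric_space set) \<Rightarrow> ('k \<Rightarrow> 'k set) \<Rightarrow> (('k \<Rightarrow> 'a) \<Rightarrow> ('k \<Rightarrow> 'a)) \<Rightarrow>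
   ('k \<Rightarrow> 'k \<Rightarrow> real) \<Rightarrow> bool" where
  "lipschitz_constants Idx Y J G L \<longleftrightarrow>
     (\<forall>p\<in>Idx. \<forall>q\<in>Idx. L p q \<ge> 0 \<and> (p \<notin> J q \<longrightarrow> L p q = 0)) \<and>
     (\<forall>u\<in>PiE Idx Y. \<forall>w\<in>PiE Idx Y. \<forall>q\<in>Idx.
        dist (G u q) (G w q) \<le> (\<Sum>p\<in>Idx. L p q * dist (u p) (w p)))"

text \<open>Spectral radius of a real matrix indexed by a finite set Idx (via an arbitrary
  enumeration of Idx; the spectral radius does not depend on it).\<close>
definition idx_enum :: "'k set \<Rightarrow> nat \<Rightarrow> 'k" where
  "idx_enum Idx = (SOME e. bij_betw e {..<card Idx} Idx)"

definition spec_rad :: "'k set \<Rightarrow> ('k \<Rightarrow> 'k \<Rightarrow> real) \<Rightarrow> real" where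
  "spec_rad Idx L = spectral_radius
     (mat (card Idx) (card Idx) (\<lambda>(a, b). complex_of_real (L (idx_enum Idx a) (idx_enum Idx b))))"

end

theory Submission
  imports Defs
begin

(* Orbits of F lift, from time n on, to orbits of the expansion X_S F.  The distance between two
   lifted orbits is therefore a subsolution of the linear recurrence given by the Lipschitz matrix,
   whose powers decay geometrically since its spectral radius is below 1: the coordinates in S
   synchronize, uniformly in the initial points.  Outside S the graph is acyclic, and a coordinate
   whose inputs all synchronize synchronizes too, being a Lipschitz function of them; by
   well-founded induction every coordinate synchronizes.  Hence every orbit is Cauchy, the limit
   of one of them is a fixed point by continuity, and it attracts every orbit. *)

lemma smult_pow_mat:
  fixes A :: "'a::comm_semiring_1 mat"
  assumes "A \<in> carrier_mat N N"
  shows "(a \<cdot>\<^sub>m A) ^\<^sub>m k = a ^ k \<cdot>\<^sub>m (A ^\<^sub>m k)"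
proof (induction k)
  case 0
  show ?case by (rule eq_matI) auto
next
  case (Suc k)
  have "(a \<cdot>\<^sub>m A) ^\<^sub>m Suc k = a ^ k \<cdot>\<^sub>m (A ^\<^sub>m k) * (a \<cdot>\<^sub>m A)"
    using Suc by simp
  also have "\<dots> = a ^ k \<cdot>\<^sub>m (a \<cdot>\<^sub>m (A ^\<^sub>m k * A))"
    using assms by (simp add: mult_smult_assoc_mat[of "A ^\<^sub>m k" N N "a \<cdot>\<^sub>m A" N]
        mult_smult_distrib[of "A ^\<^sub>m k" N N A N])
  also have "\<dots> = a ^ Suc k \<cdot>\<^sub>m (A ^\<^sub>m Suc k)"
    by (rule eq_matI) (auto simp: mult_ac)
  finally show ?case .
qed

lemma spectral_radius_smult_le:
  fixes A :: "complex mat"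
  assumes A: "A \<in> carrier_mat N N" and N: "0 < N" and a: "a \<noteq> 0"
  shows "spectral_radius (a \<cdot>\<^sub>m A) \<le> cmod a * spectral_radius A"
proof -
  have aA: "a \<cdot>\<^sub>m A \<in> carrier_mat N N" using A by simp
  obtain \<mu> where \<mu>: "\<mu> \<in> spectrum (a \<cdot>\<^sub>m A)" "spectral_radius (a \<cdot>\<^sub>m A) = cmod \<mu>"
    using spectral_radius_mem_max(1)[OF aA N] by auto
  then obtain v where v: "v \<in> carrier_vec N" "v \<noteq> 0\<^sub>v N" "(a \<cdot>\<^sub>m A) *\<^sub>v v = \<mu> \<cdot>\<^sub>v v"
    using A unfolding spectrum_def eigenvalue_def eigenvector_def by auto
  have "(a \<cdot>\<^sub>m A) *\<^sub>v v = a \<cdot>\<^sub>v (A *\<^sub>v v)"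
    by (rule eq_vecI) (use A v(1) in \<open>auto simp: scalar_prod_def sum_distrib_left mult_ac\<close>)
  then have "A *\<^sub>v v = inverse a \<cdot>\<^sub>v (\<mu> \<cdot>\<^sub>v v)"
    using a v(3) by (simp add: smult_smult_assoc)
  then have "A *\<^sub>v v = (\<mu> / a) \<cdot>\<^sub>v v"
    by (simp add: smult_smult_assoc divide_inverse mult.commute)
  then have "cmod (\<mu> / a) \<in> cmod ` spectrum A"
    using A v unfolding spectrum_def eigenvalue_def eigenvector_def by auto
  then have "cmod \<mu> / cmod a \<le> spectral_radius A"
    using spectral_radius_mem_max(2)[OF A N] by (simp add: norm_divide)
  then show ?thesis using \<mu>(2) a by (simp add: field_simps)
qed

lemma real_mat_pow_geometric_bound:
  fixes M :: "real mat"
  assumes M: "M \<in> carrier_mat N N"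
    and sr: "spectral_radius (map_mat complex_of_real M) < 1"
  obtains c r where "0 < r" "r < 1"
    "\<And>m i j. i < N \<Longrightarrow> j < N \<Longrightarrow> \<bar>(M ^\<^sub>m m) $$ (i, j)\<bar> \<le> c * r ^ m"
proof (cases "N = 0")
  case True
  show ?thesis by (rule that[of "1/2"]) (use True in auto)
next
  case False
  define A where "A = map_mat complex_of_real M"
  have A: "A \<in> carrier_mat N N" using M unfolding A_def by simp
  define r where "r = (spectral_radius A + 1) / 2"
  have "0 \<le> spectral_radius A"
    using spectral_radius_mem_max(1)[OF A] False by auto
  then have r: "0 < r" "r < 1" "spectral_radius A < r"
    using sr unfolding r_def A_def by auto
  define B where "B = complex_of_real (1 / r) \<cdot>\<^sub>m A"
  have B: "B \<in> carrier_mat N N" using A unfolding B_def by simp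
  \<comment> \<open>rescaling by r pushes the spectral radius below 1, so the powers of B stay bounded\<close>
  have "spectral_radius B \<le> spectral_radius A / r"
    using spectral_radius_smult_le[OF A, of "complex_of_real (1 / r)"] False r
    unfolding B_def by (simp add: norm_divide)
  also have "\<dots> < 1" using r by simp
  finally obtain c where c: "\<And>m. norm_bound (B ^\<^sub>m m) c"
    using spectral_radius_jnf_norm_bound_less_1_upper_triangular[OF B] by blast
  have "\<bar>(M ^\<^sub>m m) $$ (i, j)\<bar> \<le> c * r ^ m" if "i < N" "j < N" for m i j
  proof -
    have "B ^\<^sub>m m = complex_of_real ((1 / r) ^ m) \<cdot>\<^sub>m map_mat complex_of_real (M ^\<^sub>m m)"
      using smult_pow_mat[OF A] unfolding B_def A_def of_real_hom.mat_hom_pow[OF M] by simp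
    then have "cmod ((B ^\<^sub>m m) $$ (i, j)) = \<bar>(M ^\<^sub>m m) $$ (i, j)\<bar> / r ^ m"
      using that M r by (simp add: norm_mult norm_power norm_divide power_one_over)
    moreover have "cmod ((B ^\<^sub>m m) $$ (i, j)) \<le> c"
      using c[of m] that B unfolding norm_bound_def by auto
    ultimately show ?thesis using r by (simp add: divide_le_eq mult.commute)
  qed
  then show ?thesis using that r by blast
qed

lemma idx_enum_bij: "finite E \<Longrightarrow> bij_betw (idx_enum E) {..<card E} E"
  unfolding idx_enum_def
  using ex_bij_betw_nat_finite[of E] someI_ex[of "\<lambda>e. bij_betw e {..<card E} E"]
  by (simp add: atLeast0LessThan)

lemma pow_mat_Suc_index:
  assumes "M \<in> carrier_mat N N" "a < N" "b < N"
  shows "(M ^\<^sub>m Suc m) $$ (a, b) = (\<Sum>c<N. (M ^\<^sub>m m) $$ (a, c) * M $$ (c, b))"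
  using assms by (simp add: scalar_prod_def atLeast0LessThan)

definition linear_subsolution ::
    "'k set \<Rightarrow> ('k \<Rightarrow> 'k \<Rightarrow> real) \<Rightarrow> real \<Rightarrow> (nat \<Rightarrow> 'k \<Rightarrow> real) \<Rightarrow> bool" where
  "linear_subsolution E L D d \<longleftrightarrow>
     (\<forall>m. \<forall>q\<in>E. d (Suc m) q \<le> (\<Sum>p\<in>E. L p q * d m p)) \<and> (\<forall>q\<in>E. d 0 q \<le> D)"

lemma subsolution_le_column_sum:
  fixes L :: "'k \<Rightarrow> 'k \<Rightarrow> real"
  assumes e: "bij_betw e {..<N} E" and L_nonneg: "\<forall>p\<in>E. \<forall>q\<in>E. 0 \<le> L p q"
    and d: "linear_subsolution E L D d" and b: "b < N"
  shows "d m (e b) \<le> D * (\<Sum>a<N. (mat N N (\<lambda>(a, b). L (e a) (e b)) ^\<^sub>m m) $$ (a, b))"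
proof -
  define M where "M = mat N N (\<lambda>(a, b). L (e a) (e b))"
  have M: "M \<in> carrier_mat N N" unfolding M_def by simp
  have e_in: "\<And>a. a < N \<Longrightarrow> e a \<in> E" using e by (auto dest: bij_betw_apply)
  have step: "\<And>m q. q \<in> E \<Longrightarrow> d (Suc m) q \<le> (\<Sum>p\<in>E. L p q * d m p)"
    and init: "\<And>q. q \<in> E \<Longrightarrow> d 0 q \<le> D"
    using d unfolding linear_subsolution_def by blast+
  have "d m (e b) \<le> D * (\<Sum>a<N. (M ^\<^sub>m m) $$ (a, b))"
    using b
  proof (induction m arbitrary: b)
    case 0
    then show ?case using init[OF e_in] M by simp
  next
    case (Suc m)
    have "d (Suc m) (e b) \<le> (\<Sum>c<N. L (e c) (e b) * d m (e c))"
      using step[OF e_in[OF Suc.prems]] sum.reindex_bij_betw[OF e, of "\<lambda>p. L p (e b) * d m p"]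
      by simp
    also have "\<dots> \<le> (\<Sum>c<N. L (e c) (e b) * (D * (\<Sum>a<N. (M ^\<^sub>m m) $$ (a, c))))"
      using Suc L_nonneg e_in by (intro sum_mono mult_left_mono) auto
    also have "\<dots> = (\<Sum>c<N. \<Sum>a<N. D * ((M ^\<^sub>m m) $$ (a, c) * M $$ (c, b)))"
    proof (rule sum.cong[OF refl])
      fix c assume "c \<in> {..<N}"
      then have "M $$ (c, b) = L (e c) (e b)" using Suc.prems unfolding M_def by simp
      then show "L (e c) (e b) * (D * (\<Sum>a<N. (M ^\<^sub>m m) $$ (a, c)))
          = (\<Sum>a<N. D * ((M ^\<^sub>m m) $$ (a, c) * M $$ (c, b)))"
        by (simp add: sum_distrib_left mult.left_commute mult.commute)
    qed
    also have "\<dots> = D * (\<Sum>a<N. \<Sum>c<N. (M ^\<^sub>m m) $$ (a, c) * M $$ (c, b))"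
      by (subst sum.swap) (simp add: sum_distrib_left)
    also have "\<dots> = D * (\<Sum>a<N. (M ^\<^sub>m Suc m) $$ (a, b))"
      using pow_mat_Suc_index[OF M _ Suc.prems] by simp
    finally show ?case .
  qed
  then show ?thesis unfolding M_def .
qed

lemma spec_rad_subsolution_decay:
  fixes E :: "'k set" and L :: "'k \<Rightarrow> 'k \<Rightarrow> real" and D :: real
  assumes E: "finite E" and L_nonneg: "\<forall>p\<in>E. \<forall>q\<in>E. 0 \<le> L p q"
    and sr: "spec_rad E L < 1"
  obtains r K where "0 < r" "r < 1"
    "\<And>d m q. linear_subsolution E L D d \<Longrightarrow> q \<in> E \<Longrightarrow> d m q \<le> K * r ^ m"
proof -
  define N where "N = card E"
  define e where "e = idx_enum E"
  have e: "bij_betw e {..<N} E" unfolding e_def N_def using idx_enum_bij[OF E] .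
  define M where "M = mat N N (\<lambda>(a, b). L (e a) (e b))"
  have M: "M \<in> carrier_mat N N" unfolding M_def by simp
  have "spectral_radius (map_mat complex_of_real M) = spec_rad E L"
    unfolding spec_rad_def M_def N_def e_def by (rule arg_cong[where f = spectral_radius]) auto
  with sr obtain c r where r: "0 < r" "r < 1"
    and c: "\<And>m a b. a < N \<Longrightarrow> b < N \<Longrightarrow> \<bar>(M ^\<^sub>m m) $$ (a, b)\<bar> \<le> c * r ^ m"
    using real_mat_pow_geometric_bound[OF M] by (metis (no_types, lifting))
  have "d m q \<le> (\<bar>D\<bar> * N * c) * r ^ m" if d: "linear_subsolution E L D d" and q: "q \<in> E" for d m q
  proof -
    obtain b where b: "b < N" "q = e b" using q e by (auto simp: bij_betw_def)
    have "d m q \<le> D * (\<Sum>a<N. (M ^\<^sub>m m) $$ (a, b))"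
      unfolding b(2) M_def by (rule subsolution_le_column_sum[OF e L_nonneg d b(1)])
    also have "\<dots> \<le> \<bar>D\<bar> * \<bar>\<Sum>a<N. (M ^\<^sub>m m) $$ (a, b)\<bar>"
      by (metis abs_ge_self abs_mult)
    also have "\<dots> \<le> \<bar>D\<bar> * (\<Sum>a<N. \<bar>(M ^\<^sub>m m) $$ (a, b)\<bar>)"
      by (intro mult_left_mono sum_abs) simp
    also have "\<dots> \<le> \<bar>D\<bar> * (\<Sum>a<N. c * r ^ m)"
      using c b by (intro mult_left_mono sum_mono) auto
    finally show ?thesis by (simp add: mult_ac)
  qed
  then show ?thesis using that r by blast
qed

lemma successively_rtrancl:
  "successively (\<lambda>a b. (a, b) \<in> R) (x # xs) \<Longrightarrow> y \<in> set (x # xs) \<Longrightarrow> (x, y) \<in> R\<^sup>*"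
proof (induction xs arbitrary: x)
  case (Cons z zs)
  then have xz: "(x, z) \<in> R" and zs: "successively (\<lambda>a b. (a, b) \<in> R) (z # zs)" by auto
  show ?case
  proof (cases "y = x")
    case False
    then have "y \<in> set (z # zs)" using Cons.prems(2) by simp
    from converse_rtrancl_into_rtrancl[OF xz Cons.IH[OF zs this]] show ?thesis .
  qed simp
qed simp

lemma set_subset_if_successively:
  assumes "successively (\<lambda>a b. (a, b) \<in> R) xs" "R \<subseteq> A \<times> A" "2 \<le> length xs"
  shows "set xs \<subseteq> A"
  using assms
proof (induction xs rule: induct_list012)
  case (3 x y zs)
  then have "x \<in> A" "y \<in> A" by auto
  moreover have "set zs \<subseteq> A" using 3 by (cases zs) auto
  ultimately show ?case by simp
qed simp_all

lemma dmax_tendsto_0: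
  assumes n: "1 \<le> n" and lim: "\<And>i. i \<in> {1..n} \<Longrightarrow> ((\<lambda>k. x k i) \<longlongrightarrow> y i) F"
  shows "((\<lambda>k. dmax n (x k) y) \<longlongrightarrow> 0) F"
proof (rule tendsto_sandwich)
  have "0 \<le> dmax n (x k) y" for k
  proof -
    have "dist (x k 1) (y 1) \<le> dmax n (x k) y" unfolding dmax_def using n by (intro Max_ge) auto
    then show ?thesis using zero_le_dist[of "x k 1" "y 1"] by linarith
  qed
  then show "\<forall>\<^sub>F k in F. 0 \<le> dmax n (x k) y" by simp
  have "dmax n (x k) y \<le> (\<Sum>i\<in>{1..n}. dist (x k i) (y i))" for k
    unfolding dmax_def
  proof (rule Max.boundedI)
    fix a assume "a \<in> (\<lambda>i. dist (x k i) (y i)) ` {1..n}"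
    then obtain i where i: "i \<in> {1..n}" and a: "a = dist (x k i) (y i)" by blast
    show "a \<le> (\<Sum>i\<in>{1..n}. dist (x k i) (y i))"
      unfolding a by (rule member_le_sum[OF i]) auto
  qed (use n in auto)
  then show "\<forall>\<^sub>F k in F. dmax n (x k) y \<le> (\<Sum>i\<in>{1..n}. dist (x k i) (y i))" by simp
  show "((\<lambda>k. \<Sum>i\<in>{1..n}. dist (x k i) (y i)) \<longlongrightarrow> 0) F"
    using lim by (intro tendsto_null_sum tendsto_dist_iff[THEN iffD1])
qed simp

lemma funpow_split: "a \<le> m \<Longrightarrow> (g ^^ m) y = (g ^^ a) ((g ^^ (m - a)) y)"
  by (metis comp_apply funpow_add le_add_diff_inverse)

locale interaction_system =
  fixes n :: nat and X :: "nat \<Rightarrow> 'a::metric_space set" and I :: "nat \<Rightarrow> nat set"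
    and f :: "nat \<Rightarrow> (nat \<Rightarrow> 'a) \<Rightarrow> 'a" and Lam :: "nat \<Rightarrow> nat \<Rightarrow> real" and S :: "nat set"
  assumes interaction: "is_interaction n X I f Lam"
    and feedback_set: "st0 n I S"
begin

abbreviation "F \<equiv> interaction_map n I f"
abbreviation "\<X> \<equiv> PiE {1..n} X"
abbreviation "E \<equiv> exp_idx n I S"
abbreviation "G \<equiv> graph_edges n I"
abbreviation "G_free \<equiv> G \<inter> (({1..n} - S) \<times> ({1..n} - S))"

lemma I_subset: "j \<in> {1..n} \<Longrightarrow> I j \<subseteq> {1..n}"
  using interaction unfolding is_interaction_def by blast

lemma f_in: "j \<in> {1..n} \<Longrightarrow> x \<in> PiE (I j) X \<Longrightarrow> f j x \<in> X j"
  using interaction unfolding is_interaction_def by blast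

lemma f_dist_le:
  "j \<in> {1..n} \<Longrightarrow> x \<in> PiE (I j) X \<Longrightarrow> y \<in> PiE (I j) X \<Longrightarrow>
    dist (f j x) (f j y) \<le> (\<Sum>i\<in>I j. Lam i j * dist (x i) (y i))"
  using interaction unfolding is_interaction_def by blast

lemma Lam_nonneg: "i \<in> {1..n} \<Longrightarrow> j \<in> {1..n} \<Longrightarrow> 0 \<le> Lam i j"
  using interaction unfolding is_interaction_def by blast

lemma S_subset: "S \<subseteq> {1..n}" and S_nonempty: "S \<noteq> {}"
  using feedback_set unfolding st0_def by auto

lemma n_pos: "1 \<le> n"
  using S_subset S_nonempty by (cases n) auto

lemma acyclic_G_free: "acyclic G_free"
  using feedback_set unfolding st0_def by blast

lemma graph_edges_subset: "G \<subseteq> {1..n} \<times> {1..n}"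
  using I_subset unfolding graph_edges_def by blast

lemma restrict_in_PiE: "x \<in> \<X> \<Longrightarrow> j \<in> {1..n} \<Longrightarrow> restrict x (I j) \<in> PiE (I j) X"
  using I_subset by (auto simp: PiE_iff)

lemma F_in: "x \<in> \<X> \<Longrightarrow> F x \<in> \<X>"
  by (auto simp: interaction_map_def intro!: f_in restrict_in_PiE)

lemma funpow_F_in: "x \<in> \<X> \<Longrightarrow> (F ^^ k) x \<in> \<X>"
  by (induction k) (use F_in in auto)

lemma F_dist_le:
  assumes "x \<in> \<X>" "x' \<in> \<X>" "j \<in> {1..n}"
  shows "dist (F x j) (F x' j) \<le> (\<Sum>i\<in>I j. Lam i j * dist (x i) (x' i))"
  using f_dist_le[OF assms(3) restrict_in_PiE[OF assms(1,3)] restrict_in_PiE[OF assms(2,3)]] assms(3)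
  by (simp add: interaction_map_def)

lemma funpow_F_Suc_apply:
  "j \<in> {1..n} \<Longrightarrow> (F ^^ Suc t) y j = f j (restrict ((F ^^ t) y) (I j))"
  by (simp add: interaction_map_def)

lemma exp_idx_Inl_iff [simp]: "Inl j \<in> E \<longleftrightarrow> j \<in> S"
  unfolding exp_idx_def by auto

lemma exp_idx_Inr_iff [simp]:
  "Inr (\<beta>, l) \<in> E \<longleftrightarrow> \<beta> \<in> branches n I S \<and> 1 \<le> l \<and> l \<le> length \<beta> - 2"
  unfolding exp_idx_def by auto

lemma branch_hd_in_S: "\<beta> \<in> branches n I S \<Longrightarrow> hd \<beta> \<in> S"
  unfolding branches_def is_branch_def by blast

lemma branch_bounds:
  assumes "\<beta> \<in> branches n I S"
  shows "set \<beta> \<subseteq> {1..n}" "length \<beta> \<le> n + 1"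
proof -
  have \<beta>: "2 \<le> length \<beta>" "successively (\<lambda>a b. (a, b) \<in> G) \<beta>" "distinct (tl \<beta>)"
    using assms unfolding branches_def is_branch_def successively_conv_nth
    by (auto simp: distinct_tl)
  show set: "set \<beta> \<subseteq> {1..n}"
    using set_subset_if_successively[OF \<beta>(2) graph_edges_subset \<beta>(1)] .
  have "length (tl \<beta>) = card (set (tl \<beta>))" using \<beta>(3) by (simp add: distinct_card)
  also have "\<dots> \<le> card {1..n}"
  proof (rule card_mono)
    have "set (tl \<beta>) \<subseteq> set \<beta>" by (cases \<beta>) auto
    with set show "set (tl \<beta>) \<subseteq> {1..n}" by blast
  qed simp
  finally show "length \<beta> \<le> n + 1" by simp
qed

lemma finite_exp_idx: "finite E"
proof (rule finite_subset)
  show "E \<subseteq> Inl ` S \<union> (\<lambda>(\<beta>, l). Inr (\<beta>, l)) ` ({\<beta>. set \<beta> \<subseteq> {1..n} \<and> length \<beta> \<le> n + 1} \<times> {..n})"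
    unfolding exp_idx_def using branch_bounds by fastforce
  show "finite \<dots>"
    using S_subset finite_subset
    by (intro finite_UnI finite_imageI finite_cartesian_product finite_lists_length_le) auto
qed

text \<open>\<open>k # ks @ [j]\<close> is the path \<open>v\<^sub>k \<rightarrow> \<dots> \<rightarrow> v\<^sub>j\<close> along which \<open>exp_term\<close> reaches
  the variable \<open>x\<^sub>k\<close> while unfolding \<open>F\<^sub>j\<close>, \<open>j \<in> S\<close>.\<close>
definition unfolding_path :: "nat \<Rightarrow> nat list \<Rightarrow> nat \<Rightarrow> bool" where
  "unfolding_path k ks j \<longleftrightarrow> j \<in> S \<and> set ks \<subseteq> {1..n} - S \<and> distinct ks \<and>
     (k \<notin> S \<longrightarrow> k \<notin> set ks) \<and> successively (\<lambda>a b. (a, b) \<in> G) (k # ks @ [j])"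

lemma unfolding_path_start: "j \<in> S \<Longrightarrow> k \<in> I j \<Longrightarrow> unfolding_path k [] j"
  using S_subset unfolding unfolding_path_def graph_edges_def by auto

lemma unfolding_path_hd_in_range:
  assumes "unfolding_path k ks j" shows "k \<in> {1..n}"
proof -
  have "(k, hd (ks @ [j])) \<in> G"
    using assms unfolding unfolding_path_def by (cases ks) auto
  then show ?thesis using graph_edges_subset by blast
qed

text \<open>Acyclicity of the graph outside \<open>S\<close> keeps unfolding paths simple, which bounds their
  length.\<close>
lemma unfolding_path_Cons:
  assumes p: "unfolding_path k ks j" and k: "k \<notin> S" and k': "k' \<in> I k"
  shows "unfolding_path k' (k # ks) j"
proof -
  have k_range: "k \<in> {1..n}" using unfolding_path_hd_in_range[OF p] .
  have k'_range: "k' \<in> {1..n}" using I_subset[OF k_range] k' by blast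
  have "k' \<notin> set (k # ks)" if k'_free: "k' \<notin> S"
  proof
    assume k'_in: "k' \<in> set (k # ks)"
    have "successively (\<lambda>a b. (a, b) \<in> G) (k # ks)"
      using p successively_append_iff[of _ "k # ks" "[j]"] unfolding unfolding_path_def by simp
    then have "successively (\<lambda>a b. (a, b) \<in> G_free) (k # ks)"
      by (rule successively_mono) (use p k k_range in \<open>auto simp: unfolding_path_def\<close>)
    from successively_rtrancl[OF this k'_in] have "(k, k') \<in> G_free\<^sup>*" .
    moreover have "(k', k) \<in> G_free"
      using k k' k_range k'_range k'_free unfolding graph_edges_def by auto
    ultimately have "(k', k') \<in> G_free\<^sup>+" by (blast intro: rtrancl_into_trancl2)
    then show False using acyclic_G_free unfolding acyclic_def by blast
  qed
  then show ?thesis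
    using p k k_range k' unfolding unfolding_path_def graph_edges_def by auto
qed

lemma unfolding_path_length:
  assumes p: "unfolding_path k ks j"
  shows "length ks + 1 \<le> n" and "k \<notin> S \<Longrightarrow> length ks + 2 \<le> n"
proof -
  have "0 < card S" using S_nonempty finite_subset[OF S_subset] by (simp add: card_gt_0_iff)
  moreover have "card S \<le> n" using card_mono[OF _ S_subset] by simp
  ultimately have free_card: "card ({1..n} - S) + 1 \<le> n"
    using S_subset by (simp add: card_Diff_subset finite_subset)
  have "length ks = card (set ks)" using p by (simp add: unfolding_path_def distinct_card)
  also have "\<dots> \<le> card ({1..n} - S)" using p by (intro card_mono) (auto simp: unfolding_path_def)
  finally show "length ks + 1 \<le> n" using free_card by linarith
  assume "k \<notin> S"
  then have "length (k # ks) = card (set (k # ks))" and "set (k # ks) \<subseteq> {1..n} - S"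
    using p unfolding_path_hd_in_range[OF p] by (auto simp: unfolding_path_def distinct_card)
  then have "length (k # ks) \<le> card ({1..n} - S)" by (simp add: card_mono)
  then show "length ks + 2 \<le> n" using free_card by simp
qed

lemma unfolding_path_branch:
  assumes p: "unfolding_path k ks j" and k: "k \<in> S" and ks: "ks \<noteq> []"
  shows "k # ks @ [j] \<in> branches n I S"
proof -
  have j: "j \<in> S" and ks_free: "set ks \<subseteq> {1..n} - S" and "distinct ks"
    and edges: "successively (\<lambda>a b. (a, b) \<in> G) (k # ks @ [j])"
    using p unfolding unfolding_path_def by auto
  then have "distinct (ks @ [j])" by auto
  moreover have "k = j \<or> k \<notin> set (ks @ [j])" using k ks_free by auto
  ultimately have "distinct (k # ks @ [j]) \<or> (k = j \<and> distinct (ks @ [j]))" by auto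
  moreover have "(k # ks @ [j]) ! i \<notin> S" if "0 < i" "i < length ks + 1" for i
  proof -
    have "(k # ks @ [j]) ! i \<in> set ks" using that by (cases i) (auto simp: nth_append)
    then show ?thesis using ks_free by blast
  qed
  ultimately show ?thesis
    using j k ks edges unfolding branches_def is_branch_def successively_conv_nth by auto
qed

text \<open>The coordinate \<open>\<eta>(\<beta>, l)\<close> of the expansion holds the value of the initial vertex of \<open>\<beta>\<close>
  delayed by \<open>l\<close> steps.\<close>
definition expanded_orbit :: "(nat \<Rightarrow> 'a) \<Rightarrow> nat \<Rightarrow> eidx \<Rightarrow> 'a" where
  "expanded_orbit y t = restrict (\<lambda>q. case q of
       Inl j \<Rightarrow> (F ^^ t) y j
     | Inr (\<beta>, l) \<Rightarrow> (F ^^ (t - l)) y (hd \<beta>)) E"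

lemma expanded_orbit_Inl: "j \<in> S \<Longrightarrow> expanded_orbit y t (Inl j) = (F ^^ t) y j"
  unfolding expanded_orbit_def by simp

lemma expanded_orbit_Inr:
  "Inr (\<beta>, l) \<in> E \<Longrightarrow> expanded_orbit y t (Inr (\<beta>, l)) = (F ^^ (t - l)) y (hd \<beta>)"
  unfolding expanded_orbit_def by simp

lemma exp_term_expanded_orbit:
  assumes "n \<le> t"
  shows "unfolding_path k ks j \<Longrightarrow> n + 1 \<le> N + length ks \<Longrightarrow>
    exp_term S I f N (k # ks @ [j]) (expanded_orbit y t) = (F ^^ (t - length ks)) y k"
proof (induction N arbitrary: k ks)
  case 0
  then show ?case using unfolding_path_length(1) by fastforce
next
  case (Suc N)
  show ?case
  proof (cases "k \<in> S")
    case True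
    show ?thesis
    proof (cases "ks = []")
      case True
      then show ?thesis using \<open>k \<in> S\<close> by (simp add: expanded_orbit_Inl)
    next
      case False
      have "Inr (k # ks @ [j], length ks) \<in> E"
        using unfolding_path_branch[OF Suc.prems(1) \<open>k \<in> S\<close> False] False by (simp add: Suc_le_eq)
      then show ?thesis using \<open>k \<in> S\<close> False by (simp add: expanded_orbit_Inr)
    qed
  next
    case False
    have k: "k \<in> {1..n}" using unfolding_path_hd_in_range[OF Suc.prems(1)] .
    have t: "t - length ks = Suc (t - length (k # ks))"
      using unfolding_path_length(2)[OF Suc.prems(1) False] assms by simp
    have "exp_term S I f (Suc N) (k # ks @ [j]) (expanded_orbit y t)
        = f k (restrict (\<lambda>k'. exp_term S I f N (k' # (k # ks) @ [j]) (expanded_orbit y t)) (I k))"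
      using False by simp
    also have "\<dots> = f k (restrict ((F ^^ (t - length (k # ks))) y) (I k))"
    proof (intro arg_cong[where f = "f k"] restrict_ext)
      fix k' assume "k' \<in> I k"
      from Suc.IH[OF unfolding_path_Cons[OF Suc.prems(1) False this]] Suc.prems(2)
      show "exp_term S I f N (k' # (k # ks) @ [j]) (expanded_orbit y t) = (F ^^ (t - length (k # ks))) y k'"
        by simp
    qed
    also have "\<dots> = (F ^^ (t - length ks)) y k"
      unfolding t funpow_F_Suc_apply[OF k] ..
    finally show ?thesis .
  qed
qed

lemma expansion_expanded_orbit:
  assumes "n \<le> t"
  shows "expansion n S I f (expanded_orbit y t) = expanded_orbit y (Suc t)"
  unfolding expansion_def expanded_orbit_def[of y "Suc t"]
proof (rule restrict_ext)
  fix q assume q: "q \<in> E"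
  show "(case q of
          Inl j \<Rightarrow> tilde_F n S I f j (expanded_orbit y t)
        | Inr (\<beta>, l) \<Rightarrow> if l = 1 then expanded_orbit y t (Inl (hd \<beta>))
                       else expanded_orbit y t (Inr (\<beta>, l - 1))) =
        (case q of Inl j \<Rightarrow> (F ^^ Suc t) y j | Inr (\<beta>, l) \<Rightarrow> (F ^^ (Suc t - l)) y (hd \<beta>))"
  proof (cases q)
    case (Inl j)
    then have j: "j \<in> S" using q by simp
    have "tilde_F n S I f j (expanded_orbit y t) = f j (restrict ((F ^^ t) y) (I j))"
      unfolding tilde_F_def
    proof (intro arg_cong[where f = "f j"] restrict_ext)
      fix k assume "k \<in> I j"
      from exp_term_expanded_orbit[OF assms unfolding_path_start[OF j this]]
      show "exp_term S I f (n + 1) [k, j] (expanded_orbit y t) = (F ^^ t) y k"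
        by (simp del: exp_term.simps)
    qed
    then show ?thesis using Inl j S_subset funpow_F_Suc_apply[of j t y] by auto
  next
    case (Inr b)
    then obtain \<beta> l where ql: "q = Inr (\<beta>, l)" by (cases b) auto
    then have \<beta>: "\<beta> \<in> branches n I S" "1 \<le> l" "l \<le> length \<beta> - 2" using q by auto
    show ?thesis
    proof (cases "l = 1")
      case True
      then show ?thesis using ql branch_hd_in_S[OF \<beta>(1)] by (simp add: expanded_orbit_Inl)
    next
      case False
      then have "Inr (\<beta>, l - 1) \<in> E" "t - (l - 1) = Suc t - l" using \<beta> by auto
      then show ?thesis using ql False by (simp add: expanded_orbit_Inr)
    qed
  qed
qed

lemma expanded_orbit_in:
  assumes "y \<in> \<X>" shows "expanded_orbit y t \<in> PiE E (exp_fam X)"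
proof -
  have "(F ^^ k) y i \<in> X i" if "i \<in> {1..n}" for i k
    using funpow_F_in[OF assms] that by (auto simp: PiE_iff)
  moreover have "hd \<beta> \<in> {1..n}" if "\<beta> \<in> branches n I S" for \<beta>
    using S_subset branch_hd_in_S[OF that] by blast
  ultimately have "expanded_orbit y t q \<in> exp_fam X q" if "q \<in> E" for q
    using that S_subset unfolding exp_idx_def by (auto simp: expanded_orbit_def exp_fam_def)
  moreover have "expanded_orbit y t \<in> extensional E" by (simp add: expanded_orbit_def)
  ultimately show ?thesis by (simp add: PiE_iff)
qed

definition synchronizing :: "nat \<Rightarrow> bool" where
  "synchronizing i \<longleftrightarrow>
     (\<forall>\<epsilon>>0. \<forall>\<^sub>F t in sequentially. \<forall>y\<in>\<X>. \<forall>y'\<in>\<X>. dist ((F ^^ t) y i) ((F ^^ t) y' i) < \<epsilon>)"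

lemma synchronizing_if_inputs_synchronizing:
  assumes i: "i \<in> {1..n}" and inputs: "\<And>k. k \<in> I i \<Longrightarrow> synchronizing k"
  shows "synchronizing i"
  unfolding synchronizing_def
proof (intro allI impI)
  fix \<epsilon> :: real assume \<epsilon>: "0 < \<epsilon>"
  define C where "C = 1 + (\<Sum>k\<in>I i. Lam k i)"
  have Lam: "\<And>k. k \<in> I i \<Longrightarrow> 0 \<le> Lam k i" using Lam_nonneg I_subset[OF i] i by blast
  then have C: "0 < C" unfolding C_def by (simp add: add_pos_nonneg sum_nonneg)
  have "finite (I i)" using I_subset[OF i] finite_subset by blast
  moreover have "\<forall>\<^sub>F t in sequentially. \<forall>y\<in>\<X>. \<forall>y'\<in>\<X>. dist ((F ^^ t) y k) ((F ^^ t) y' k) < \<epsilon> / C"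
    if "k \<in> I i" for k
    using inputs[OF that] \<epsilon> C unfolding synchronizing_def by simp
  ultimately have "\<forall>\<^sub>F t in sequentially.
      \<forall>k\<in>I i. \<forall>y\<in>\<X>. \<forall>y'\<in>\<X>. dist ((F ^^ t) y k) ((F ^^ t) y' k) < \<epsilon> / C"
    by (simp add: eventually_ball_finite)
  then have "\<forall>\<^sub>F t in sequentially.
      \<forall>y\<in>\<X>. \<forall>y'\<in>\<X>. dist ((F ^^ Suc t) y i) ((F ^^ Suc t) y' i) < \<epsilon>"
  proof (rule eventually_mono, intro ballI)
    fix t y y'
    assume close: "\<forall>k\<in>I i. \<forall>y\<in>\<X>. \<forall>y'\<in>\<X>. dist ((F ^^ t) y k) ((F ^^ t) y' k) < \<epsilon> / C"
      and y: "y \<in> \<X>" and y': "y' \<in> \<X>"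
    have "dist ((F ^^ Suc t) y i) ((F ^^ Suc t) y' i)
        \<le> (\<Sum>k\<in>I i. Lam k i * dist ((F ^^ t) y k) ((F ^^ t) y' k))"
      using F_dist_le[OF funpow_F_in[OF y] funpow_F_in[OF y'] i] by simp
    also have "\<dots> \<le> (\<Sum>k\<in>I i. Lam k i * (\<epsilon> / C))"
      using close y y' Lam by (intro sum_mono mult_left_mono) (auto intro: less_imp_le)
    also have "\<dots> = (\<Sum>k\<in>I i. Lam k i) * (\<epsilon> / C)" by (rule sum_distrib_right[symmetric])
    also have "\<dots> < C * (\<epsilon> / C)"
      using \<epsilon> C unfolding C_def by (intro mult_strict_right_mono) auto
    also have "\<dots> = \<epsilon>" using C by simp
    finally show "dist ((F ^^ Suc t) y i) ((F ^^ Suc t) y' i) < \<epsilon>" .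
  qed
  then show "\<forall>\<^sub>F t in sequentially. \<forall>y\<in>\<X>. \<forall>y'\<in>\<X>. dist ((F ^^ t) y i) ((F ^^ t) y' i) < \<epsilon>"
    by (rule eventually_sequentially_Suc[THEN iffD1])
qed

end

locale contracting_expansion = interaction_system +
  fixes L :: "eidx \<Rightarrow> eidx \<Rightarrow> real"
  assumes compact_nonempty: "\<forall>i\<in>{1..n}. compact (X i) \<and> X i \<noteq> {}"
    and expansion_lipschitz:
      "lipschitz_constants (exp_idx n I S) (exp_fam X) (exp_deps n I S) (expansion n S I f) L"
    and spec_rad_less_1: "spec_rad (exp_idx n I S) L < 1"
begin

lemma exp_fam_bounded:
  obtains D where "\<And>q u w. u \<in> PiE E (exp_fam X) \<Longrightarrow> w \<in> PiE E (exp_fam X) \<Longrightarrow> q \<in> E \<Longrightarrow>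
    dist (u q) (w q) \<le> D"
proof
  define U where "U = (\<Union>i\<in>{1..n}. X i)"
  have "bounded U"
    unfolding U_def using compact_nonempty by (intro compact_imp_bounded compact_UN) auto
  moreover have "exp_fam X q \<subseteq> U" if "q \<in> E" for q
    using that S_subset branch_hd_in_S unfolding U_def exp_idx_def exp_fam_def by fastforce
  ultimately show "dist (u q) (w q) \<le> diameter U"
    if "u \<in> PiE E (exp_fam X)" "w \<in> PiE E (exp_fam X)" "q \<in> E" for q u w
    using that by (intro diameter_bounded_bound) (auto simp: PiE_iff)
qed

lemma feedback_coordinates_decay:
  obtains K r where "0 < r" "r < 1"
    "\<And>y y' j m. y \<in> \<X> \<Longrightarrow> y' \<in> \<X> \<Longrightarrow> j \<in> S \<Longrightarrow>
        dist ((F ^^ (m + n)) y j) ((F ^^ (m + n)) y' j) \<le> K * r ^ m"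
proof -
  have L_nonneg: "\<forall>p\<in>E. \<forall>q\<in>E. 0 \<le> L p q"
    and L_lipschitz: "\<And>u w q. u \<in> PiE E (exp_fam X) \<Longrightarrow> w \<in> PiE E (exp_fam X) \<Longrightarrow> q \<in> E \<Longrightarrow>
        dist (expansion n S I f u q) (expansion n S I f w q) \<le> (\<Sum>p\<in>E. L p q * dist (u p) (w p))"
    using expansion_lipschitz unfolding lipschitz_constants_def by blast+
  obtain D where D: "\<And>q u w. u \<in> PiE E (exp_fam X) \<Longrightarrow> w \<in> PiE E (exp_fam X) \<Longrightarrow> q \<in> E \<Longrightarrow>
      dist (u q) (w q) \<le> D"
    using exp_fam_bounded by blast
  obtain r K where r: "0 < r" "r < 1"
    and decay: "\<And>d m q. linear_subsolution E L D d \<Longrightarrow> q \<in> E \<Longrightarrow> d m q \<le> K * r ^ m"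
    using spec_rad_subsolution_decay[OF finite_exp_idx L_nonneg spec_rad_less_1, of D] by blast
  have "dist ((F ^^ (m + n)) y j) ((F ^^ (m + n)) y' j) \<le> K * r ^ m"
    if y: "y \<in> \<X>" and y': "y' \<in> \<X>" and j: "j \<in> S" for y y' j m
  proof -
    define d where "d m q = dist (expanded_orbit y (m + n) q) (expanded_orbit y' (m + n) q)" for m q
    have "d (Suc m) q \<le> (\<Sum>p\<in>E. L p q * d m p)" if "q \<in> E" for m q
    proof -
      have "d (Suc m) q = dist (expansion n S I f (expanded_orbit y (m + n)) q)
          (expansion n S I f (expanded_orbit y' (m + n)) q)"
        unfolding d_def by (simp add: expansion_expanded_orbit)
      also have "\<dots> \<le> (\<Sum>p\<in>E. L p q * d m p)"
        unfolding d_def by (rule L_lipschitz[OF expanded_orbit_in[OF y] expanded_orbit_in[OF y'] that])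
      finally show ?thesis .
    qed
    moreover have "d 0 q \<le> D" if "q \<in> E" for q
      unfolding d_def using D[OF expanded_orbit_in[OF y] expanded_orbit_in[OF y'] that] by simp
    ultimately have "linear_subsolution E L D d" unfolding linear_subsolution_def by blast
    then have "d m (Inl j) \<le> K * r ^ m" using j by (intro decay) simp_all
    then show ?thesis using j by (simp add: d_def expanded_orbit_Inl)
  qed
  with r that show ?thesis by blast
qed

lemma synchronizing_feedback: "j \<in> S \<Longrightarrow> synchronizing j"
  unfolding synchronizing_def
proof (intro allI impI)
  fix \<epsilon> :: real assume j: "j \<in> S" and \<epsilon>: "0 < \<epsilon>"
  obtain K r where r: "0 < r" "r < 1" and decay: "\<And>y y' m. y \<in> \<X> \<Longrightarrow> y' \<in> \<X> \<Longrightarrow>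
      dist ((F ^^ (m + n)) y j) ((F ^^ (m + n)) y' j) \<le> K * r ^ m"
    using feedback_coordinates_decay j by metis
  have "(\<lambda>m. K * r ^ m) \<longlonglongrightarrow> 0"
    using r by (intro tendsto_mult_right_zero LIMSEQ_power_zero) simp
  then have "\<forall>\<^sub>F m in sequentially. K * r ^ m < \<epsilon>" using \<epsilon> by (rule order_tendstoD)
  then have "\<forall>\<^sub>F m in sequentially.
      \<forall>y\<in>\<X>. \<forall>y'\<in>\<X>. dist ((F ^^ (m + n)) y j) ((F ^^ (m + n)) y' j) < \<epsilon>"
  proof (rule eventually_mono, intro ballI)
    fix m y y' assume "K * r ^ m < \<epsilon>" "y \<in> \<X>" "y' \<in> \<X>"
    with decay[of y y' m] show "dist ((F ^^ (m + n)) y j) ((F ^^ (m + n)) y' j) < \<epsilon>" by linarith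
  qed
  then show "\<forall>\<^sub>F t in sequentially. \<forall>y\<in>\<X>. \<forall>y'\<in>\<X>. dist ((F ^^ t) y j) ((F ^^ t) y' j) < \<epsilon>"
    by (rule eventually_sequentially_seg[THEN iffD1])
qed

lemma synchronizing_all:
  assumes "i \<in> {1..n}" shows "synchronizing i"
proof -
  have "wf G_free"
    using acyclic_G_free by (rule finite_acyclic_wf[rotated]) (simp add: graph_edges_def)
  then show ?thesis using assms
  proof (induction i rule: wf_induct_rule)
    case (less i)
    show ?case
    proof (cases "i \<in> S")
      case True
      then show ?thesis by (rule synchronizing_feedback)
    next
      case False
      have "synchronizing k" if k: "k \<in> I i" for k
      proof (cases "k \<in> S")
        case True
        then show ?thesis by (rule synchronizing_feedback)
      next
        case False
        have "k \<in> {1..n}" using I_subset[OF less.prems] k by blast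
        with False \<open>i \<notin> S\<close> less.prems k have "(k, i) \<in> G_free"
          by (auto simp: graph_edges_def)
        from less.IH[OF this \<open>k \<in> {1..n}\<close>] show ?thesis .
      qed
      with less.prems show ?thesis by (rule synchronizing_if_inputs_synchronizing)
    qed
  qed
qed

lemma orbit_coordinate_Cauchy:
  assumes y: "y \<in> \<X>" and i: "i \<in> {1..n}"
  shows "Cauchy (\<lambda>t. (F ^^ t) y i)"
  unfolding Cauchy_def
proof (intro allI impI)
  fix \<epsilon> :: real assume "0 < \<epsilon>"
  then obtain T where T: "\<And>t u w. T \<le> t \<Longrightarrow> u \<in> \<X> \<Longrightarrow> w \<in> \<X> \<Longrightarrow>
      dist ((F ^^ t) u i) ((F ^^ t) w i) < \<epsilon>"
    using synchronizing_all[OF i] unfolding synchronizing_def eventually_sequentially by meson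
  have "dist ((F ^^ m) y i) ((F ^^ k) y i) < \<epsilon>" if "T \<le> m" "T \<le> k" for m k
    using T[of "min m k" "(F ^^ (m - min m k)) y" "(F ^^ (k - min m k)) y"] that
      funpow_split[of "min m k" m F y] funpow_split[of "min m k" k F y] funpow_F_in[OF y]
    by simp
  then show "\<exists>T. \<forall>m\<ge>T. \<forall>k\<ge>T. dist ((F ^^ m) y i) ((F ^^ k) y i) < \<epsilon>" by blast
qed

lemma orbit_converges:
  assumes y: "y \<in> \<X>"
  obtains x where "x \<in> \<X>" "\<And>i. i \<in> {1..n} \<Longrightarrow> (\<lambda>t. (F ^^ t) y i) \<longlonglongrightarrow> x i"
proof -
  have "\<exists>l\<in>X i. (\<lambda>t. (F ^^ t) y i) \<longlonglongrightarrow> l" if i: "i \<in> {1..n}" for i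
  proof (rule completeE)
    show "complete (X i)" using compact_nonempty i by (simp add: compact_imp_complete)
    show "\<forall>t. (F ^^ t) y i \<in> X i" using funpow_F_in[OF y] i by (auto simp: PiE_iff)
  qed (use orbit_coordinate_Cauchy[OF y i] in blast)+
  then obtain g where g: "\<And>i. i \<in> {1..n} \<Longrightarrow> g i \<in> X i \<and> (\<lambda>t. (F ^^ t) y i) \<longlonglongrightarrow> g i"
    by metis
  show ?thesis by (rule that[of "restrict g {1..n}"]) (use g in auto)
qed

lemma F_coordinate_tendsto:
  assumes u: "\<And>t. u t \<in> \<X>" and x: "x \<in> \<X>" and j: "j \<in> {1..n}"
    and lim: "\<And>i. i \<in> {1..n} \<Longrightarrow> (\<lambda>t. u t i) \<longlonglongrightarrow> x i"
  shows "(\<lambda>t. F (u t) j) \<longlonglongrightarrow> F x j"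
proof (rule tendsto_dist_iff[THEN iffD2], rule Lim_null_comparison)
  from F_dist_le[OF u x j]
  show "\<forall>\<^sub>F t in sequentially. norm (dist (F (u t) j) (F x j)) \<le> (\<Sum>i\<in>I j. Lam i j * dist (u t i) (x i))"
    by simp
  show "(\<lambda>t. \<Sum>i\<in>I j. Lam i j * dist (u t i) (x i)) \<longlonglongrightarrow> 0"
    using lim I_subset[OF j]
    by (intro tendsto_null_sum tendsto_mult_right_zero tendsto_dist_iff[THEN iffD1]) auto
qed

lemma synchronizing_dist_tendsto_0:
  assumes "synchronizing i" "y \<in> \<X>" "y' \<in> \<X>"
  shows "(\<lambda>t. dist ((F ^^ t) y i) ((F ^^ t) y' i)) \<longlonglongrightarrow> 0"
proof (rule order_tendstoI)
  fix \<epsilon> :: real assume "0 < \<epsilon>"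
  with assms(1) have "\<forall>\<^sub>F t in sequentially.
      \<forall>y\<in>\<X>. \<forall>y'\<in>\<X>. dist ((F ^^ t) y i) ((F ^^ t) y' i) < \<epsilon>"
    unfolding synchronizing_def by blast
  then show "\<forall>\<^sub>F t in sequentially. dist ((F ^^ t) y i) ((F ^^ t) y' i) < \<epsilon>"
    by (rule eventually_mono) (use assms(2,3) in blast)
qed (simp add: order_less_le_trans[OF _ zero_le_dist])

lemma orbit_limit_fixed:
  assumes y: "y \<in> \<X>" and x: "x \<in> \<X>"
    and lim: "\<And>i. i \<in> {1..n} \<Longrightarrow> (\<lambda>t. (F ^^ t) y i) \<longlonglongrightarrow> x i"
  shows "F x = x"
proof (rule PiE_ext[OF F_in[OF x] x])
  fix j assume j: "j \<in> {1..n}"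
  show "F x j = x j"
  proof (rule LIMSEQ_unique)
    show "(\<lambda>t. F ((F ^^ t) y) j) \<longlonglongrightarrow> F x j"
      using F_coordinate_tendsto[OF funpow_F_in[OF y] x j lim] .
    show "(\<lambda>t. F ((F ^^ t) y) j) \<longlonglongrightarrow> x j"
      using LIMSEQ_Suc[OF lim[OF j]] by simp
  qed
qed

theorem globally_attracting_fixed_point:
  "\<exists>xbar\<in>\<X>. F xbar = xbar \<and> (\<forall>y\<in>\<X>. (\<lambda>k. dmax n ((F ^^ k) y) xbar) \<longlonglongrightarrow> 0)"
proof -
  have "\<X> \<noteq> {}" using compact_nonempty by (simp add: PiE_eq_empty_iff)
  then obtain y0 where y0: "y0 \<in> \<X>" by blast
  obtain xbar where xbar: "xbar \<in> \<X>"
    and lim: "\<And>i. i \<in> {1..n} \<Longrightarrow> (\<lambda>t. (F ^^ t) y0 i) \<longlonglongrightarrow> xbar i"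
    using orbit_converges[OF y0] by blast
  have fixed: "F xbar = xbar" by (rule orbit_limit_fixed[OF y0 xbar lim])
  then have fixed_iter: "(F ^^ k) xbar = xbar" for k by (induction k) simp_all
  have "(\<lambda>k. dmax n ((F ^^ k) y) xbar) \<longlonglongrightarrow> 0" if y: "y \<in> \<X>" for y
  proof (rule dmax_tendsto_0[OF n_pos])
    fix i assume "i \<in> {1..n}"
    from synchronizing_dist_tendsto_0[OF synchronizing_all[OF this] y xbar]
    show "(\<lambda>k. (F ^^ k) y i) \<longlonglongrightarrow> xbar i" by (simp add: fixed_iter tendsto_dist_iff[of _ "xbar i"])
  qed
  with xbar fixed show ?thesis by blast
qed

end

theorem theorem9:
  fixes n :: nat and X :: "nat \<Rightarrow> 'a::metric_space set" and I :: "nat \<Rightarrow> nat set"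
    and f :: "nat \<Rightarrow> (nat \<Rightarrow> 'a) \<Rightarrow> 'a" and Lam :: "nat \<Rightarrow> nat \<Rightarrow> real"
    and S :: "nat set" and L :: "eidx \<Rightarrow> eidx \<Rightarrow> real"
  assumes "\<forall>i\<in>{1..n}. compact (X i) \<and> X i \<noteq> {}"
    and "is_interaction n X I f Lam"
    and "st0 n I S"
    and "lipschitz_constants (exp_idx n I S) (exp_fam X) (exp_deps n I S) (expansion n S I f) L"
    and "spec_rad (exp_idx n I S) L < 1"
  shows "\<exists>xbar\<in>PiE {1..n} X. interaction_map n I f xbar = xbar \<and>
           (\<forall>y\<in>PiE {1..n} X.
              (\<lambda>k. dmax n ((interaction_map n I f ^^ k) y) xbar) \<longlonglongrightarrow> 0)"
proof -
  interpret contracting_expansion n X I f Lam S L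
    by unfold_locales (fact assms)+
  show ?thesis by (rule globally_attracting_fixed_point)
qed

end
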